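(* Let $H=([n],E)$ be a hypergraph without loops. For $1\le a\le\#E$ and $b\in\mathbb{N}$ let $s(a,b)$ be the number of $a$-element subsets $S\subseteq E$ such that the hypergraph $([n],S)$ has exactly $b$ connected components (isolated vertices counting as components); set $s(0,n)=1$ and $s(0,b)=0$ for $b\ne n$. Write $T(b,i)=\sum_{c=0}^i(-1)^c\binom{i}{c}(i-c+2)^b$. Then for all $0\le i\le n$ and every $0\le m\le\#E$: \[f_i(\chi_H(k+1))=\sum_{a=0}^{\#E}(-1)^a\sum_{b=0}^n s(a,b)\,T(b,i),\] \[f_i(\chi_H(k+1))\le\sum_{a=0}^{m}(-1)^a\sum_{b=0}^n s(a,b)\,T(b,i)\quad\text{if $m$ is even},\] \[f_i(\chi_H(k+1))\ge\sum_{a=0}^{m}(-1)^a\sum_{b=0}^n s(a,b)\,T(b,i)\quad\text{if $m$ is odd}.\] Moreover, if $l=\min\{\#F: F\in E\}$ and $n-l+2\le i\le n$, then $f_i(\chi_H(k+1))=\sum_{j=0}^i(-1)^j\binom{i}{j}(i-j+2)^n$.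
   Context: A hypergraph $H=([n],E)$ has edges that are nonempty subsets of $[n]$; "without loops" means no edge has cardinality 1; also no edge is properly contained in another. A proper $k$-coloring is a map $[n]\to[k]$ with no monochromatic edge; $\chi_H(k)$ is the number of proper $k$-colorings. For a polynomial $p(k)$ of degree at most $n$, its $f$-vector is defined by $p(k)=\sum_{i=0}^n f_i(p)\binom{k-1}{i}$, $f_{-1}=1$; here $f_i(\chi_H(k+1))$ refers to the polynomial $k\mapsto\chi_H(k+1)$. *)

theory Defs
  imports Main "HOL-Library.FuncSet"
begin

definition hypergraph_noloops :: "nat \<Rightarrow> nat set set \<Rightarrow> bool" where
  "hypergraph_noloops n E \<longleftrightarrow>
     (\<forall>F\<in>E. F \<subseteq> {1..n} \<and> F \<noteq> {} \<and> card F \<noteq> 1) \<and>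
     (\<forall>F\<in>E. \<forall>G\<in>E. F \<subseteq> G \<longrightarrow> F = G)"

definition chrom :: "nat \<Rightarrow> nat set set \<Rightarrow> nat \<Rightarrow> nat" where
  "chrom n E k = card {c \<in> {1..n} \<rightarrow>\<^sub>E {1..k}. \<forall>F\<in>E. \<not> (\<exists>x. \<forall>v\<in>F. c v = x)}"

text \<open>f-vector of a polynomial p of degree at most n:
  p(k) = sum_{i=0}^n f_i(p) * binom(k-1, i) (polynomial identity; it suffices, and is equivalent, to require it at all integers k >= 1,
  which determines the coefficients uniquely).\<close>
definition fvec :: "nat \<Rightarrow> (nat \<Rightarrow> int) \<Rightarrow> nat \<Rightarrow> int" where
  "fvec n p = (THE f. (\<forall>j>n. f j = 0) \<and>
      (\<forall>k::nat. k \<ge> 1 \<longrightarrow> p k = (\<Sum>j\<le>n. f j * int ((k - 1) choose j))))"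

definition ncomp :: "nat \<Rightarrow> nat set set \<Rightarrow> nat" where
  "ncomp n S = card ({1..n} // ({(u, v). \<exists>F\<in>S. u \<in> F \<and> v \<in> F}\<^sup>*))"

definition scount :: "nat \<Rightarrow> nat set set \<Rightarrow> nat \<Rightarrow> nat \<Rightarrow> nat" where
  "scount n E a b = (if a = 0 then (if b = n then 1 else 0)
      else card {S. S \<subseteq> E \<and> card S = a \<and> ncomp n S = b})"

definition Tcoef :: "nat \<Rightarrow> nat \<Rightarrow> int" where
  "Tcoef b i = (\<Sum>c=0..i. (-1)^c * int (i choose c) * (int i - int c + 2)^b)"

end

theory Submission
  imports Defs
begin

(*
  Let f_i be the i-th entry of the f-vector of k \<mapsto> \<chi>_H(k+1).  The proof identifies f_i
  combinatorially: f_i is the number of proper colourings of H with colours 1..i+2 that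
  use every colour 3..i+2.  Both this number and \<chi>_H are computed by inclusion-exclusion
  over the sets J of edges that are forced to be monochromatic.  A colouring constant on
  every edge of J is the same as a colouring of the c(J) connected components of ([n],J),
  so \<chi>_H(k) = \<Sum>_J (-1)^|J| k^c(J), while the colourings using all of 3..i+2 give
  \<Sum>_J (-1)^|J| T(c(J),i), T(b,i) being the number of maps from a b-set to 1..i+2 hitting
  3..i+2.  The Newton-type expansion (x+2)^b = \<Sum>_j T(b,j) C(x,j) links the two, and the
  uniqueness of expansions in the basis C(k-1,j) identifies f_i.  Truncating the
  inclusion-exclusion sum gives the Bonferroni inequalities.  Finally T(b,i) = 0 for b < i,
  and a nonempty J containing an edge of size l has at most n-l+1 components, so for
  i \<ge> n-l+2 only J = {} contributes.
*)

definition alt_sum :: "'a set \<Rightarrow> nat \<Rightarrow> ('a set \<Rightarrow> int) \<Rightarrow> int" where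
  "alt_sum I m w = (\<Sum>a=0..m. (-1)^a * (\<Sum>J\<in>{J. J \<subseteq> I \<and> card J = a}. w J))"

lemma alt_sum_cong:
  assumes "\<And>J. J \<subseteq> I \<Longrightarrow> w J = w' J"
  shows "alt_sum I m w = alt_sum I m w'"
  unfolding alt_sum_def using assms by (intro sum.cong refl arg_cong2[where f = "(*)"]) auto

lemma alt_sum_linear:
  "alt_sum I m (\<lambda>J. \<Sum>j\<in>X. w J j * c j) = (\<Sum>j\<in>X. alt_sum I m (\<lambda>J. w J j) * c j)"
proof -
  have "alt_sum I m (\<lambda>J. \<Sum>j\<in>X. w J j * c j)
      = (\<Sum>a=0..m. \<Sum>J\<in>{J. J \<subseteq> I \<and> card J = a}. \<Sum>j\<in>X. (-1)^a * w J j * c j)"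
    unfolding alt_sum_def by (simp add: sum_distrib_left mult.assoc)
  also have "\<dots> = (\<Sum>j\<in>X. \<Sum>a=0..m. \<Sum>J\<in>{J. J \<subseteq> I \<and> card J = a}. (-1)^a * w J j * c j)"
    by (simp add: sum.swap[where B = X])
  also have "\<dots> = (\<Sum>j\<in>X. alt_sum I m (\<lambda>J. w J j) * c j)"
    unfolding alt_sum_def by (simp add: sum_distrib_left sum_distrib_right mult.assoc)
  finally show ?thesis .
qed

lemma alt_sum_only_empty:
  assumes "finite I" and "\<And>J. J \<subseteq> I \<Longrightarrow> J \<noteq> {} \<Longrightarrow> w J = 0"
  shows "alt_sum I m w = w {}"
proof -
  have "{J. J \<subseteq> I \<and> card J = 0} = {{}}"
    using assms(1) by (auto simp: card_eq_0_iff dest: rev_finite_subset)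
  moreover have "(\<Sum>J\<in>{J. J \<subseteq> I \<and> card J = a}. w J) = 0" if "a \<ge> 1" for a
    using that by (intro sum.neutral) (auto intro!: assms(2))
  ultimately show ?thesis
    unfolding alt_sum_def by (subst sum.atLeast_Suc_atMost) simp_all
qed

lemma choose_alternating_partial_sum:
  assumes "t \<ge> 1"
  shows "(\<Sum>a\<le>m. (-1)^a * int (t choose a)) = (-1)^m * int ((t - 1) choose m)"
proof (induction m)
  case 0 then show ?case by simp
next
  case (Suc m)
  obtain s where t: "t = Suc s" using assms by (cases t) auto
  have "(\<Sum>a\<le>Suc m. (-1)^a * int (t choose a))
      = (-1)^m * int (s choose m) + (-1)^Suc m * int (t choose Suc m)"
    using Suc t by simp
  also have "\<dots> = (-1)^Suc m * int (s choose Suc m)"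
    by (simp add: t algebra_simps)
  finally show ?case by (simp add: t)
qed

lemma bonferroni_remainder:
  fixes U :: "'a set" and I :: "'b set" and A :: "'b \<Rightarrow> 'a set"
  assumes fU: "finite U" and fI: "finite I"
  shows "alt_sum I m (\<lambda>J. int (card {x\<in>U. \<forall>j\<in>J. x \<in> A j}))
       = int (card {x\<in>U. \<forall>j\<in>I. x \<notin> A j})
         + (-1)^m * (\<Sum>x\<in>{x\<in>U. \<exists>j\<in>I. x \<in> A j}. int ((card {j\<in>I. x \<in> A j} - 1) choose m))"
proof -
  define T where "T x = {j\<in>I. x \<in> A j}" for x
  have fT: "finite (T x)" for x using fI by (simp add: T_def)
  text \<open>Double counting the pairs \<open>(x, J)\<close> with \<open>J \<subseteq> T x\<close>, \<open>|J| = a\<close>.\<close>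
  have pairs: "(\<Sum>J\<in>{J. J \<subseteq> I \<and> card J = a}. int (card {x\<in>U. \<forall>j\<in>J. x \<in> A j}))
      = (\<Sum>x\<in>U. int (card (T x) choose a))" for a
  proof -
    have "(\<Sum>J\<in>{J. J \<subseteq> I \<and> card J = a}. int (card {x\<in>U. \<forall>j\<in>J. x \<in> A j}))
        = (\<Sum>J\<in>{J. J \<subseteq> I \<and> card J = a}. \<Sum>x\<in>U. if \<forall>j\<in>J. x \<in> A j then 1 else 0)"
      using fU by (simp add: sum.If_cases Int_def)
    also have "\<dots> = (\<Sum>x\<in>U. \<Sum>J\<in>{J. J \<subseteq> I \<and> card J = a}. if \<forall>j\<in>J. x \<in> A j then 1 else 0)"
      by (rule sum.swap)
    also have "\<dots> = (\<Sum>x\<in>U. int (card {J\<in>{J. J \<subseteq> I \<and> card J = a}. \<forall>j\<in>J. x \<in> A j}))"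
      using fI by (intro sum.cong refl) (simp add: sum.If_cases Int_def)
    also have "\<dots> = (\<Sum>x\<in>U. int (card {J. J \<subseteq> T x \<and> card J = a}))"
      by (intro sum.cong refl arg_cong[where f = "\<lambda>S. int (card S)"]) (auto simp: T_def)
    also have "\<dots> = (\<Sum>x\<in>U. int (card (T x) choose a))"
      using n_subsets[OF fT] by simp
    finally show ?thesis .
  qed
  have point: "(\<Sum>a\<le>m. (-1)^a * int (card (T x) choose a))
      = (if \<exists>j\<in>I. x \<in> A j then (-1)^m * int ((card (T x) - 1) choose m) else 1)" for x
  proof (cases "\<exists>j\<in>I. x \<in> A j")
    case True
    then have "card (T x) \<ge> 1" using fT by (auto simp: T_def Suc_le_eq card_gt_0_iff)
    then show ?thesis using True choose_alternating_partial_sum by simp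
  next
    case False
    then have "T x = {}" by (auto simp: T_def)
    then show ?thesis using False by (induction m) auto
  qed
  have "alt_sum I m (\<lambda>J. int (card {x\<in>U. \<forall>j\<in>J. x \<in> A j}))
      = (\<Sum>x\<in>U. \<Sum>a\<le>m. (-1)^a * int (card (T x) choose a))"
    unfolding alt_sum_def pairs by (simp add: atLeast0AtMost sum_distrib_left sum.swap[where A = U])
  also have "\<dots> = (\<Sum>x\<in>U. if \<exists>j\<in>I. x \<in> A j then (-1)^m * int ((card (T x) - 1) choose m) else 1)"
    by (simp add: point)
  finally show ?thesis
    using fU by (simp add: sum.If_cases Int_def sum_distrib_left T_def conj_commute)
qed

text \<open>Inclusion-exclusion: for \<open>m = |I|\<close> the error term vanishes.\<close>
lemma inclusion_exclusion:
  fixes U :: "'a set" and I :: "'b set" and A :: "'b \<Rightarrow> 'a set"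
  assumes fU: "finite U" and fI: "finite I"
  shows "alt_sum I (card I) (\<lambda>J. int (card {x\<in>U. \<forall>j\<in>J. x \<in> A j}))
       = int (card {x\<in>U. \<forall>j\<in>I. x \<notin> A j})"
proof -
  have "card {j\<in>I. x \<in> A j} - 1 < card I" if "\<exists>j\<in>I. x \<in> A j" for x
  proof -
    have "card {j\<in>I. x \<in> A j} \<le> card I" using fI by (intro card_mono) auto
    moreover have "card {j\<in>I. x \<in> A j} > 0" using that fI by (auto simp: card_gt_0_iff)
    ultimately show ?thesis by simp
  qed
  then show ?thesis using bonferroni_remainder[OF fU fI, of "card I" A] by (simp add: binomial_eq_0)
qed

lemma bonferroni_even:
  fixes U :: "'a set" and I :: "'b set" and A :: "'b \<Rightarrow> 'a set"
  assumes "finite U" "finite I" "even m"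
  shows "int (card {x\<in>U. \<forall>j\<in>I. x \<notin> A j}) \<le> alt_sum I m (\<lambda>J. int (card {x\<in>U. \<forall>j\<in>J. x \<in> A j}))"
  using bonferroni_remainder[OF assms(1,2), of m A] assms(3) by (simp add: sum_nonneg)

lemma bonferroni_odd:
  fixes U :: "'a set" and I :: "'b set" and A :: "'b \<Rightarrow> 'a set"
  assumes "finite U" "finite I" "odd m"
  shows "alt_sum I m (\<lambda>J. int (card {x\<in>U. \<forall>j\<in>J. x \<in> A j})) \<le> int (card {x\<in>U. \<forall>j\<in>I. x \<notin> A j})"
  using bonferroni_remainder[OF assms(1,2), of m A] assms(3) by (simp add: sum_nonneg)


text \<open>\<open>cover_num r b i\<close> counts the maps from a \<open>b\<close>-element set to \<open>{1..r+i}\<close> whose image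
  contains the \<open>i\<close> colours \<open>r+1..r+i\<close> (lemma \<open>card_covering_maps\<close>); \<open>Tcoef\<close> is the
  case \<open>r = 2\<close>.\<close>
definition cover_num :: "nat \<Rightarrow> nat \<Rightarrow> nat \<Rightarrow> int" where
  "cover_num r b i = (\<Sum>c=0..i. (-1)^c * int (i choose c) * (int r + int i - int c)^b)"

lemma Tcoef_cover_num: "Tcoef b i = cover_num 2 b i"
  unfolding Tcoef_def cover_num_def by (intro sum.cong refl) (simp add: algebra_simps)

text \<open>Inclusion-exclusion over the set of missed colours.\<close>
lemma card_covering_maps:
  assumes fB: "finite B"
  shows "int (card {f \<in> B \<rightarrow>\<^sub>E {1..r+i}. {r+1..r+i} \<subseteq> f ` B}) = cover_num r (card B) i"
proof -
  define I where "I = {r+1..r+i}"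
  define A where "A j = {f. j \<notin> f ` B}" for j :: nat
  have fI: "finite I" and cI: "card I = i" unfolding I_def by simp_all
  text \<open>Maps avoiding a set \<open>J\<close> of \<open>a\<close> colours are the maps into the remaining \<open>r + i - a\<close>.\<close>
  have avoid: "int (card {f \<in> B \<rightarrow>\<^sub>E {1..r+i}. \<forall>j\<in>J. f \<in> A j}) = (int r + int i - int a)^card B"
    if J: "J \<subseteq> I" "card J = a" for J a
  proof -
    have "{f \<in> B \<rightarrow>\<^sub>E {1..r+i}. \<forall>j\<in>J. f \<in> A j} = B \<rightarrow>\<^sub>E ({1..r+i} - J)"
      unfolding A_def by (auto simp: PiE_def Pi_def)
    moreover have "J \<subseteq> {1..r+i}" and "finite J" using J unfolding I_def by (auto intro: finite_subset)
    then have "card ({1..r+i} - J) = r + i - a" using J by (simp add: card_Diff_subset)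
    moreover have "a \<le> i" using J cI card_mono[OF fI J(1)] by simp
    ultimately show ?thesis using fB by (simp add: card_PiE of_nat_diff)
  qed
  have "int (card {f \<in> B \<rightarrow>\<^sub>E {1..r+i}. {r+1..r+i} \<subseteq> f ` B})
      = int (card {f \<in> B \<rightarrow>\<^sub>E {1..r+i}. \<forall>j\<in>I. f \<notin> A j})"
    unfolding I_def A_def by (intro arg_cong[where f = "\<lambda>S. int (card S)"]) auto
  also have "\<dots> = alt_sum I i (\<lambda>J. int (card {f \<in> B \<rightarrow>\<^sub>E {1..r+i}. \<forall>j\<in>J. f \<in> A j}))"
    using inclusion_exclusion[OF _ fI, of "B \<rightarrow>\<^sub>E {1..r+i}" A] fB cI by (simp add: finite_PiE)
  also have "\<dots> = cover_num r (card B) i"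
  proof -
    have "(\<Sum>J\<in>{J. J \<subseteq> I \<and> card J = a}. int (card {f \<in> B \<rightarrow>\<^sub>E {1..r+i}. \<forall>j\<in>J. f \<in> A j}))
        = int (i choose a) * (int r + int i - int a)^card B" for a
    proof -
      have "(\<Sum>J\<in>{J. J \<subseteq> I \<and> card J = a}. int (card {f \<in> B \<rightarrow>\<^sub>E {1..r+i}. \<forall>j\<in>J. f \<in> A j}))
          = (\<Sum>J\<in>{J. J \<subseteq> I \<and> card J = a}. (int r + int i - int a)^card B)"
        by (intro sum.cong refl) (metis (mono_tags) mem_Collect_eq avoid)
      then show ?thesis using n_subsets[OF fI, of a] cI by simp
    qed
    then show ?thesis unfolding alt_sum_def cover_num_def by (simp add: mult.assoc)
  qed
  finally show ?thesis .
qed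

text \<open>By the pigeonhole principle no map from fewer than \<open>i\<close> points covers \<open>i\<close> colours.\<close>
lemma cover_num_eq_0:
  assumes "b < i"
  shows "cover_num r b i = 0"
proof -
  have "{f \<in> {..<b} \<rightarrow>\<^sub>E {1..r+i}. {r+1..r+i} \<subseteq> f ` {..<b}} = {}"
  proof (rule ccontr)
    assume "\<not> ?thesis"
    then obtain f where "{r+1..r+i} \<subseteq> f ` {..<b}" by auto
    then have "card {r+1..r+i} \<le> card (f ` {..<b})" by (intro card_mono) auto
    also have "\<dots> \<le> b" using card_image_le[of "{..<b}" f] by simp
    finally show False using assms by simp
  qed
  then show ?thesis using card_covering_maps[OF finite_lessThan, of b r i]
    by (simp only: card.empty of_nat_0 card_lessThan)
qed

text \<open>Recursion in the number of covered colours (splitting on whether the top colour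
  is used).\<close>
lemma cover_num_Suc: "cover_num r b (Suc i) = cover_num (Suc r) b i - cover_num r b i"
proof -
  let ?t = "\<lambda>c. (int r + int i - int c)^b"
  let ?A = "\<Sum>c\<le>i. (-1)^c * int (i choose Suc c) * ?t c"
  have "cover_num r b (Suc i) = (int r + int i + 1)^b
      + (\<Sum>c\<le>i. (-1)^Suc c * int (Suc i choose Suc c) * ?t c)"
    unfolding cover_num_def atLeast0AtMost by (subst sum.atMost_Suc_shift) (simp add: algebra_simps)
  also have "(\<Sum>c\<le>i. (-1)^Suc c * int (Suc i choose Suc c) * ?t c)
      = (\<Sum>c\<le>i. - ((-1)^c * int (i choose Suc c) * ?t c) - (-1)^c * int (i choose c) * ?t c)"
    by (intro sum.cong refl) (simp add: algebra_simps)
  also have "\<dots> = - ?A - (\<Sum>c\<le>i. (-1)^c * int (i choose c) * ?t c)"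
    by (simp add: sum_subtractf sum_negf)
  also have "(\<Sum>c\<le>i. (-1)^c * int (i choose c) * ?t c) = cover_num r b i"
    by (simp add: cover_num_def atLeast0AtMost)
  finally have step: "cover_num r b (Suc i) = (int r + int i + 1)^b - ?A - cover_num r b i"
    by simp
  have "(int r + int i + 1)^b - ?A
      = (\<Sum>c\<le>Suc i. (-1)^c * int (i choose c) * (int (Suc r) + int i - int c)^b)"
    by (subst sum.atMost_Suc_shift) (simp add: algebra_simps sum_negf)
  also have "\<dots> = cover_num (Suc r) b i"
    by (simp add: cover_num_def atLeast0AtMost)
  finally show ?thesis using step by simp
qed

text \<open>Newton-type expansion of powers in the binomial basis: sorting the maps
  \<open>{1..b} \<rightarrow> {1..r+x}\<close> by the set of colours above \<open>r\<close> they use.\<close>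
lemma power_binomial_expansion:
  assumes "b \<le> n"
  shows "(int x + int r)^b = (\<Sum>j\<le>n. cover_num r b j * int (x choose j))"
proof (induction x arbitrary: r)
  case 0
  have "(\<Sum>j\<le>n. cover_num r b j * int (0 choose j)) = cover_num r b 0"
    by (induction n) auto
  then show ?case by (simp add: cover_num_def)
next
  case (Suc x)
  let ?C = "\<lambda>j. if j = 0 then 0 else int (x choose (j - 1))"
  have top: "cover_num r b (Suc n) = 0" using assms by (intro cover_num_eq_0) simp
  have shifted: "(\<Sum>j\<le>n. cover_num r b (Suc j) * int (x choose j)) = (\<Sum>j\<le>n. cover_num r b j * ?C j)"
  proof -
    have "(\<Sum>j\<le>Suc n. cover_num r b j * ?C j) = (\<Sum>j\<le>n. cover_num r b (Suc j) * int (x choose j))"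
      by (subst sum.atMost_Suc_shift) simp
    then show ?thesis using top by simp
  qed
  have pascal: "int (Suc x choose j) = int (x choose j) + ?C j" for j
    by (cases j) auto
  have "(int (Suc x) + int r)^b = (int x + int (Suc r))^b" by (simp add: algebra_simps)
  also have "\<dots> = (\<Sum>j\<le>n. cover_num (Suc r) b j * int (x choose j))" by (rule Suc.IH)
  also have "\<dots> = (\<Sum>j\<le>n. cover_num r b j * int (x choose j))
      + (\<Sum>j\<le>n. cover_num r b (Suc j) * int (x choose j))"
    by (simp add: cover_num_Suc sum.distrib[symmetric] algebra_simps)
  also have "\<dots> = (\<Sum>j\<le>n. cover_num r b j * int (x choose j)) + (\<Sum>j\<le>n. cover_num r b j * ?C j)"
    by (simp only: shifted)
  also have "\<dots> = (\<Sum>j\<le>n. cover_num r b j * int (Suc x choose j))"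
    by (simp only: pascal distrib_left sum.distrib)
  finally show ?case .
qed


definition edge_rel :: "'a set set \<Rightarrow> ('a \<times> 'a) set" where
  "edge_rel S = {(u, v). \<exists>F\<in>S. u \<in> F \<and> v \<in> F}"

lemma ncomp_edge_rel: "ncomp n S = card ({1..n} // (edge_rel S)\<^sup>*)"
  by (simp add: ncomp_def edge_rel_def)

lemma equiv_edge_rel: "equiv UNIV ((edge_rel S)\<^sup>*)"
proof -
  have "sym (edge_rel S)" unfolding edge_rel_def sym_def by auto
  then show ?thesis unfolding equiv_def by (simp add: refl_rtrancl sym_rtrancl trans_rtrancl)
qed

lemma edge_rel_closed:
  assumes "\<forall>F\<in>S. F \<subseteq> V"
  shows "(edge_rel S)\<^sup>* `` V \<subseteq> V"
proof
  fix v assume "v \<in> (edge_rel S)\<^sup>* `` V"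
  then obtain u where "(u, v) \<in> (edge_rel S)\<^sup>*" "u \<in> V" by auto
  then show "v \<in> V"
    by (induction rule: rtrancl_induct) (use assms in \<open>auto simp: edge_rel_def\<close>)
qed

lemma constant_on_edges_iff:
  "(\<forall>F\<in>S. \<exists>x. \<forall>v\<in>F. c v = x) \<longleftrightarrow> (\<forall>(u, v)\<in>(edge_rel S)\<^sup>*. c u = c v)"
proof
  assume edges: "\<forall>F\<in>S. \<exists>x. \<forall>v\<in>F. c v = x"
  show "\<forall>(u, v)\<in>(edge_rel S)\<^sup>*. c u = c v"
  proof clarify
    fix u v assume "(u, v) \<in> (edge_rel S)\<^sup>*"
    then show "c u = c v"
    proof (induction rule: rtrancl_induct)
      case (step y z)
      then obtain F where "F \<in> S" "y \<in> F" "z \<in> F" unfolding edge_rel_def by auto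
      then show ?case using step.IH edges by metis
    qed simp
  qed
next
  assume "\<forall>(u, v)\<in>(edge_rel S)\<^sup>*. c u = c v"
  then have "c u = c v" if "F \<in> S" "u \<in> F" "v \<in> F" for F u v
    using that unfolding edge_rel_def by blast
  then show "\<forall>F\<in>S. \<exists>x. \<forall>v\<in>F. c v = x" by metis
qed

lemma bij_betw_quotient_maps:
  assumes R: "equiv UNIV R" and closed: "R `` V \<subseteq> V"
  shows "bij_betw (\<lambda>h. \<lambda>v\<in>V. h (R``{v})) (V // R \<rightarrow>\<^sub>E K) {c \<in> V \<rightarrow>\<^sub>E K. \<forall>(u, v)\<in>R. c u = c v}"
proof (rule bij_betw_byWitness[where f' = "\<lambda>c. \<lambda>q\<in>V // R. c (SOME v. v \<in> q)"])
  have self: "v \<in> R``{v}" for v using equiv_class_self[OF R UNIV_I] .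
  have same: "R``{u} = R``{v}" if "(u, v) \<in> R" for u v using R that by (simp add: equiv_class_eq)
  have sub: "q \<subseteq> V" if "q \<in> V // R" for q using that closed by (auto elim!: quotientE)
  have some: "(SOME v. v \<in> R``{u}) \<in> R``{u}" for u using self by (rule someI)
  have inV: "v \<in> V" if "(u, v) \<in> R" "u \<in> V" for u v using that closed by auto
  have symR: "(v, u) \<in> R" if "(u, v) \<in> R" for u v using R that by (auto elim: equivE symE)
  show "\<forall>h\<in>V // R \<rightarrow>\<^sub>E K. (\<lambda>q\<in>V // R. (\<lambda>v\<in>V. h (R``{v})) (SOME v. v \<in> q)) = h"
  proof (intro ballI ext)
    fix h q assume h: "h \<in> V // R \<rightarrow>\<^sub>E K"
    show "(\<lambda>q\<in>V // R. (\<lambda>v\<in>V. h (R``{v})) (SOME v. v \<in> q)) q = h q"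
    proof (cases "q \<in> V // R")
      case True
      then obtain u where q: "q = R``{u}" by (auto elim: quotientE)
      define w where "w = (SOME v. v \<in> q)"
      have "w \<in> q" using some[of u] unfolding q w_def .
      then have "w \<in> V" and "R``{w} = q" using sub[OF True] same[of u w] q by auto
      then show ?thesis using True by (simp flip: w_def)
    qed (use h in auto)
  qed
  show "\<forall>c\<in>{c \<in> V \<rightarrow>\<^sub>E K. \<forall>(u, v)\<in>R. c u = c v}.
      (\<lambda>v\<in>V. (\<lambda>q\<in>V // R. c (SOME v. v \<in> q)) (R``{v})) = c"
  proof (intro ballI ext)
    fix c v assume c: "c \<in> {c \<in> V \<rightarrow>\<^sub>E K. \<forall>(u, v)\<in>R. c u = c v}"
    show "(\<lambda>v\<in>V. (\<lambda>q\<in>V // R. c (SOME v. v \<in> q)) (R``{v})) v = c v"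
      using c some[of v] by (cases "v \<in> V") (auto intro: quotientI)
  qed
  show "(\<lambda>h. \<lambda>v\<in>V. h (R``{v})) ` (V // R \<rightarrow>\<^sub>E K) \<subseteq> {c \<in> V \<rightarrow>\<^sub>E K. \<forall>(u, v)\<in>R. c u = c v}"
    using same inV symR by (fastforce intro: quotientI)
  show "(\<lambda>c. \<lambda>q\<in>V // R. c (SOME v. v \<in> q)) ` {c \<in> V \<rightarrow>\<^sub>E K. \<forall>(u, v)\<in>R. c u = c v} \<subseteq> V // R \<rightarrow>\<^sub>E K"
  proof clarify
    fix c assume c: "c \<in> V \<rightarrow>\<^sub>E K"
    have "c (SOME v. v \<in> q) \<in> K" if q: "q \<in> V // R" for q
    proof -
      obtain u where "q = R``{u}" using q by (auto elim: quotientE)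
      then have "(SOME v. v \<in> q) \<in> V" using some[of u] sub[OF q] by auto
      then show ?thesis using c by auto
    qed
    then show "(\<lambda>q\<in>V // R. c (SOME v. v \<in> q)) \<in> V // R \<rightarrow>\<^sub>E K" by (simp add: restrict_PiE_iff)
  qed
qed

lemma card_maps_constant_on_edges:
  assumes "\<forall>F\<in>S. F \<subseteq> V"
  shows "card {c \<in> V \<rightarrow>\<^sub>E K. (\<forall>F\<in>S. \<exists>x. \<forall>v\<in>F. c v = x) \<and> Z \<subseteq> c ` V}
       = card {h \<in> V // (edge_rel S)\<^sup>* \<rightarrow>\<^sub>E K. Z \<subseteq> h ` (V // (edge_rel S)\<^sup>*)}"
proof -
  let ?R = "(edge_rel S)\<^sup>*"
  have bij: "bij_betw (\<lambda>h. \<lambda>v\<in>V. h (?R``{v})) (V // ?R \<rightarrow>\<^sub>E K) {c \<in> V \<rightarrow>\<^sub>E K. \<forall>(u, v)\<in>?R. c u = c v}"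
    by (rule bij_betw_quotient_maps[OF equiv_edge_rel edge_rel_closed[OF assms]])
  have "(\<lambda>v\<in>V. h (?R``{v})) ` V = h ` (V // ?R)" for h :: "'a set \<Rightarrow> 'b"
    unfolding quotient_def by auto
  then have "bij_betw (\<lambda>h. \<lambda>v\<in>V. h (?R``{v})) {h \<in> V // ?R \<rightarrow>\<^sub>E K. Z \<subseteq> h ` (V // ?R)}
      {c \<in> V \<rightarrow>\<^sub>E K. (\<forall>F\<in>S. \<exists>x. \<forall>v\<in>F. c v = x) \<and> Z \<subseteq> c ` V}"
    using bij_betw_Collect[OF bij] by (simp add: constant_on_edges_iff Collect_conj_eq Int_assoc)
  then show ?thesis by (simp add: bij_betw_same_card)
qed

lemma quotient_eq_image: "A // r = (\<lambda>v. r``{v}) ` A"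
  unfolding quotient_def by auto

lemma finite_quotient_atLeastAtMost: "finite ({1..(n::nat)} // r)"
  unfolding quotient_eq_image by simp

lemma card_maps_constant_on_edges_plain:
  assumes "\<forall>F\<in>S. F \<subseteq> {1..n}"
  shows "card {c \<in> {1..n} \<rightarrow>\<^sub>E K. \<forall>F\<in>S. \<exists>x. \<forall>v\<in>F. c v = x} = card K ^ ncomp n S"
  using card_maps_constant_on_edges[OF assms, of K "{}"] finite_quotient_atLeastAtMost[of n]
  by (simp add: ncomp_edge_rel card_PiE)

lemma card_maps_constant_on_edges_covering:
  assumes "\<forall>F\<in>S. F \<subseteq> {1..n}"
  shows "int (card {c \<in> {1..n} \<rightarrow>\<^sub>E {1..r+i}.
             (\<forall>F\<in>S. \<exists>x. \<forall>v\<in>F. c v = x) \<and> {r+1..r+i} \<subseteq> c ` {1..n}})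
       = cover_num r (ncomp n S) i"
  using card_maps_constant_on_edges[OF assms, of "{1..r+i}" "{r+1..r+i}"]
    card_covering_maps[OF finite_quotient_atLeastAtMost, of n "(edge_rel S)\<^sup>*" r i]
  by (simp add: ncomp_edge_rel)

lemma ncomp_empty: "ncomp n {} = n"
proof -
  have "{1..n} // (edge_rel {})\<^sup>* = (\<lambda>v. {v}) ` {1..n}"
    by (auto simp: edge_rel_def quotient_def)
  then show ?thesis by (simp add: ncomp_edge_rel card_image)
qed

lemma ncomp_le: "ncomp n S \<le> n"
  unfolding ncomp_edge_rel quotient_eq_image using card_image_le[of "{1..n}"] by simp

text \<open>An edge \<open>F\<close> of size \<open>l\<close> lies in one component, so there are at most \<open>n - l + 1\<close>.\<close>
lemma ncomp_edge_bound:
  assumes F: "F \<in> S" "F \<noteq> {}" "F \<subseteq> {1..n}"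
  shows "ncomp n S + card F \<le> n + 1"
proof -
  define cls where "cls v = (edge_rel S)\<^sup>* `` {v}" for v
  obtain u where u: "u \<in> F" using F by auto
  have "cls v = cls u" if "v \<in> F" for v
  proof -
    have "(u, v) \<in> (edge_rel S)\<^sup>*" using F u that unfolding edge_rel_def by auto
    then have "cls u = cls v" unfolding cls_def by (rule equiv_class_eq[OF equiv_edge_rel])
    then show ?thesis by simp
  qed
  then have cls_F: "cls ` F = {cls u}" using u by blast
  have "{1..n} = ({1..n} - F) \<union> F" using F by blast
  then have "cls ` {1..n} = cls ` ({1..n} - F) \<union> {cls u}"
    by (metis image_Un cls_F)
  then have "card (cls ` {1..n}) \<le> card ({1..n} - F) + 1"
    using card_Un_le[of "cls ` ({1..n} - F)" "{cls u}"] card_image_le[of "{1..n} - F" cls] by simp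
  moreover have "card ({1..n} - F) = n - card F" and "card F \<le> n"
    using F card_mono[of "{1..n}" F] by (auto simp: card_Diff_subset finite_subset)
  moreover have "ncomp n S = card (cls ` {1..n})"
    unfolding ncomp_edge_rel quotient_eq_image cls_def ..
  ultimately show ?thesis by linarith
qed


text \<open>The binomial polynomials \<open>C(x, j)\<close>, \<open>j \<le> n\<close>, are linearly independent as functions on
  the naturals: evaluate at \<open>x = 0, 1, 2, \<dots>\<close> in turn.\<close>
lemma binomial_basis_independent:
  fixes d :: "nat \<Rightarrow> int"
  assumes above: "\<forall>j>n. d j = 0" and zero: "\<forall>x. (\<Sum>j\<le>n. d j * int (x choose j)) = 0"
  shows "d j = 0"
proof (induction j rule: less_induct)
  case (less j)
  show ?case
  proof (cases "j \<le> n")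
    case True
    have "(\<Sum>l\<le>n. d l * int (j choose l)) = (\<Sum>l\<le>n. if l = j then d j else 0)"
      using less by (intro sum.cong refl) (auto simp: binomial_eq_0)
    then show ?thesis using zero True by simp
  qed (use above in simp)
qed

lemma fvec_unique:
  assumes above: "\<forall>j>n. f j = 0"
    and expansion: "\<forall>k::nat. k \<ge> 1 \<longrightarrow> p k = (\<Sum>j\<le>n. f j * int ((k - 1) choose j))"
  shows "fvec n p = f"
  unfolding fvec_def
proof (rule the_equality)
  show "(\<forall>j>n. f j = 0) \<and> (\<forall>k. 1 \<le> k \<longrightarrow> p k = (\<Sum>j\<le>n. f j * int ((k - 1) choose j)))"
    using assms by blast
next
  fix f' assume f': "(\<forall>j>n. f' j = 0) \<and> (\<forall>k. 1 \<le> k \<longrightarrow> p k = (\<Sum>j\<le>n. f' j * int ((k - 1) choose j)))"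
  have "(\<Sum>j\<le>n. (f' j - f j) * int (x choose j)) = 0" for x
    using f' expansion[rule_format, of "Suc x"] by (simp add: left_diff_distrib sum_subtractf)
  then have "f' j - f j = 0" for j
    using f' above by (intro binomial_basis_independent[of n "\<lambda>j. f' j - f j"]) auto
  then show "f' = f" by auto
qed


definition monochromatic :: "nat set \<Rightarrow> (nat \<Rightarrow> nat) set" where
  "monochromatic F = {c. \<exists>x. \<forall>v\<in>F. c v = x}"

definition full_colourings :: "nat \<Rightarrow> nat set set \<Rightarrow> nat \<Rightarrow> nat" where
  "full_colourings n E i = card {c \<in> {1..n} \<rightarrow>\<^sub>E {1..i+2}.
      {3..i+2} \<subseteq> c ` {1..n} \<and> (\<forall>F\<in>E. c \<notin> monochromatic F)}"

text \<open>The only properties of the hypergraph used below: finitely many nonempty edges in \<open>[n]\<close>.\<close>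
lemma hypergraph_noloops_finite_edges:
  assumes "hypergraph_noloops n E"
  shows "finite E" and "\<forall>F\<in>E. F \<subseteq> {1..n}" and "\<forall>F\<in>E. F \<noteq> {}"
proof -
  show edges: "\<forall>F\<in>E. F \<subseteq> {1..n}" "\<forall>F\<in>E. F \<noteq> {}"
    using assms by (auto simp: hypergraph_noloops_def)
  have "E \<subseteq> Pow {1..n}" using edges by auto
  then show "finite E" by (rule finite_subset) simp
qed

lemma chrom_inclusion_exclusion:
  assumes fE: "finite E" and E: "\<forall>F\<in>E. F \<subseteq> {1..n}"
  shows "int (chrom n E k) = alt_sum E (card E) (\<lambda>J. int k ^ ncomp n J)"
proof -
  let ?V = "{1..n} \<rightarrow>\<^sub>E {1..k}"
  have "int (chrom n E k) = int (card {c\<in>?V. \<forall>F\<in>E. c \<notin> monochromatic F})"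
    by (simp add: chrom_def monochromatic_def)
  also have "\<dots> = alt_sum E (card E) (\<lambda>J. int (card {c\<in>?V. \<forall>F\<in>J. c \<in> monochromatic F}))"
    using inclusion_exclusion[OF _ fE, of ?V monochromatic] by (simp add: finite_PiE)
  also have "\<dots> = alt_sum E (card E) (\<lambda>J. int k ^ ncomp n J)"
  proof (rule alt_sum_cong)
    fix J assume "J \<subseteq> E"
    then show "int (card {c\<in>?V. \<forall>F\<in>J. c \<in> monochromatic F}) = int k ^ ncomp n J"
      using card_maps_constant_on_edges_plain[of J n "{1..k}"] E by (auto simp: monochromatic_def)
  qed
  finally show ?thesis .
qed

lemma full_colourings_bonferroni:
  assumes fE: "finite E" and E: "\<forall>F\<in>E. F \<subseteq> {1..n}"
  shows "int (full_colourings n E i) = alt_sum E (card E) (\<lambda>J. Tcoef (ncomp n J) i)"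
    and "even m \<Longrightarrow> int (full_colourings n E i) \<le> alt_sum E m (\<lambda>J. Tcoef (ncomp n J) i)"
    and "odd m \<Longrightarrow> alt_sum E m (\<lambda>J. Tcoef (ncomp n J) i) \<le> int (full_colourings n E i)"
proof -
  let ?U = "{c \<in> {1..n} \<rightarrow>\<^sub>E {1..i+2}. {3..i+2} \<subseteq> c ` {1..n}}"
  have fU: "finite ?U" by (simp add: finite_PiE)
  have full: "full_colourings n E i = card {c\<in>?U. \<forall>F\<in>E. c \<notin> monochromatic F}"
    unfolding full_colourings_def by (simp add: conj_assoc)
  have terms: "alt_sum E m' (\<lambda>J. int (card {c\<in>?U. \<forall>F\<in>J. c \<in> monochromatic F}))
      = alt_sum E m' (\<lambda>J. Tcoef (ncomp n J) i)" for m'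
  proof (rule alt_sum_cong)
    fix J assume "J \<subseteq> E"
    then have J: "\<forall>F\<in>J. F \<subseteq> {1..n}" using E by blast
    have "{c\<in>?U. \<forall>F\<in>J. c \<in> monochromatic F} = {c \<in> {1..n} \<rightarrow>\<^sub>E {1..2+i}.
        (\<forall>F\<in>J. \<exists>x. \<forall>v\<in>F. c v = x) \<and> {2+1..2+i} \<subseteq> c ` {1..n}}"
      by (auto simp: monochromatic_def add.commute)
    then show "int (card {c\<in>?U. \<forall>F\<in>J. c \<in> monochromatic F}) = Tcoef (ncomp n J) i"
      using card_maps_constant_on_edges_covering[OF J, of 2 i] by (simp add: Tcoef_cover_num)
  qed
  show "int (full_colourings n E i) = alt_sum E (card E) (\<lambda>J. Tcoef (ncomp n J) i)"
    using inclusion_exclusion[OF fU fE, of monochromatic] full terms by simp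
  show "even m \<Longrightarrow> int (full_colourings n E i) \<le> alt_sum E m (\<lambda>J. Tcoef (ncomp n J) i)"
    using bonferroni_even[OF fU fE, of m monochromatic] full terms by simp
  show "odd m \<Longrightarrow> alt_sum E m (\<lambda>J. Tcoef (ncomp n J) i) \<le> int (full_colourings n E i)"
    using bonferroni_odd[OF fU fE, of m monochromatic] full terms by simp
qed

text \<open>The f-vector of \<open>k \<mapsto> \<chi>(k+1)\<close> counts full colourings: expand each \<open>(k+1)^c(J)\<close> in the
  basis \<open>C(k-1, j)\<close> and compare coefficients.\<close>
lemma fvec_chrom:
  assumes fE: "finite E" and E: "\<forall>F\<in>E. F \<subseteq> {1..n}" and "i \<le> n"
  shows "fvec n (\<lambda>k. int (chrom n E (k + 1))) i = int (full_colourings n E i)"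
proof -
  define f where "f j = (if j \<le> n then int (full_colourings n E j) else 0)" for j
  have "fvec n (\<lambda>k. int (chrom n E (k + 1))) = f"
  proof (rule fvec_unique)
    show "\<forall>j>n. f j = 0" by (simp add: f_def)
    show "\<forall>k. k \<ge> 1 \<longrightarrow> int (chrom n E (k + 1)) = (\<Sum>j\<le>n. f j * int ((k - 1) choose j))"
    proof (intro allI impI)
      fix k :: nat assume k: "k \<ge> 1"
      have "int (chrom n E (k + 1)) = alt_sum E (card E) (\<lambda>J. int (k + 1) ^ ncomp n J)"
        by (rule chrom_inclusion_exclusion[OF fE E])
      also have "\<dots> = alt_sum E (card E) (\<lambda>J. \<Sum>j\<le>n. Tcoef (ncomp n J) j * int ((k - 1) choose j))"
      proof (rule alt_sum_cong)
        fix J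
        have "int (k + 1) ^ ncomp n J = (int (k - 1) + int 2) ^ ncomp n J" using k by simp
        also have "\<dots> = (\<Sum>j\<le>n. cover_num 2 (ncomp n J) j * int ((k - 1) choose j))"
          by (rule power_binomial_expansion[OF ncomp_le])
        finally show "int (k + 1) ^ ncomp n J = (\<Sum>j\<le>n. Tcoef (ncomp n J) j * int ((k - 1) choose j))"
          by (simp only: Tcoef_cover_num)
      qed
      also have "\<dots> = (\<Sum>j\<le>n. alt_sum E (card E) (\<lambda>J. Tcoef (ncomp n J) j) * int ((k - 1) choose j))"
        by (rule alt_sum_linear)
      also have "\<dots> = (\<Sum>j\<le>n. f j * int ((k - 1) choose j))"
        by (intro sum.cong refl) (simp add: f_def full_colourings_bonferroni(1)[OF fE E])
      finally show "int (chrom n E (k + 1)) = (\<Sum>j\<le>n. f j * int ((k - 1) choose j))" .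
    qed
  qed
  then show ?thesis using \<open>i \<le> n\<close> by (simp add: f_def)
qed

lemma scount_alt_sum:
  assumes fE: "finite E"
  shows "(\<Sum>a=0..m. (-1)^a * (\<Sum>b=0..n. int (scount n E a b) * w b)) = alt_sum E m (\<lambda>J. w (ncomp n J))"
  unfolding alt_sum_def
proof (intro sum.cong refl arg_cong2[where f = "(*)"])
  fix a
  define Js where "Js = {J. J \<subseteq> E \<and> card J = a}"
  have "Js \<subseteq> Pow E" unfolding Js_def by blast
  then have fJs: "finite Js" using fE by (meson finite_Pow_iff finite_subset)
  have scount: "scount n E a b = card {J\<in>Js. ncomp n J = b}" for b
  proof (cases "a = 0")
    case True
    then have "Js = {{}}" unfolding Js_def using fE by (auto simp: card_eq_0_iff dest: rev_finite_subset)
    then have "{J\<in>Js. ncomp n J = b} = (if b = n then {{}} else {})" by (auto simp: ncomp_empty)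
    then show ?thesis using True by (simp add: scount_def)
  qed (simp add: scount_def Js_def)
  have "(\<Sum>J\<in>Js. w (ncomp n J)) = (\<Sum>b=0..n. \<Sum>J\<in>{J\<in>Js. ncomp n J = b}. w (ncomp n J))"
    using fJs ncomp_le by (intro sum.group[symmetric]) auto
  also have "\<dots> = (\<Sum>b=0..n. int (scount n E a b) * w b)"
    by (intro sum.cong refl) (simp add: scount)
  finally show "(\<Sum>b=0..n. int (scount n E a b) * w b) = (\<Sum>J\<in>{J. J \<subseteq> E \<and> card J = a}. w (ncomp n J))"
    unfolding Js_def ..
qed

text \<open>If \<open>i \<ge> n - l + 2\<close>, \<open>l\<close> the minimal edge size, every nonempty edge set has fewer than
  \<open>i\<close> components, so its term \<open>T(c(J), i)\<close> vanishes.\<close>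
lemma Tcoef_ncomp_vanishes:
  assumes fE: "finite E" and E: "\<forall>F\<in>E. F \<subseteq> {1..n} \<and> F \<noteq> {}"
    and J: "J \<subseteq> E" "J \<noteq> {}" and i: "n - Min (card ` E) + 2 \<le> i"
  shows "Tcoef (ncomp n J) i = 0"
proof -
  obtain F where F: "F \<in> J" using J by auto
  have "F \<in> E" using F J by auto
  then have "ncomp n J + card F \<le> n + 1" using ncomp_edge_bound[OF F] E by simp
  moreover have "Min (card ` E) \<le> card F" using fE F J by (intro Min_le) auto
  moreover have "card F \<le> n" using E F J card_mono[of "{1..n}" F] by auto
  ultimately have "ncomp n J < i" using i by linarith
  then show ?thesis by (simp add: Tcoef_cover_num cover_num_eq_0)
qed

theorem mainTheorem8:
  fixes n :: nat and E :: "nat set set" and i m :: nat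
  assumes H: "hypergraph_noloops n E"
    and i: "i \<le> n" and m: "m \<le> card E"
  shows "fvec n (\<lambda>k. int (chrom n E (k + 1))) i
           = (\<Sum>a=0..card E. (-1)^a * (\<Sum>b=0..n. int (scount n E a b) * Tcoef b i))
       \<and> (even m \<longrightarrow> fvec n (\<lambda>k. int (chrom n E (k + 1))) i
           \<le> (\<Sum>a=0..m. (-1)^a * (\<Sum>b=0..n. int (scount n E a b) * Tcoef b i)))
       \<and> (odd m \<longrightarrow> fvec n (\<lambda>k. int (chrom n E (k + 1))) i
           \<ge> (\<Sum>a=0..m. (-1)^a * (\<Sum>b=0..n. int (scount n E a b) * Tcoef b i)))
       \<and> (E \<noteq> {} \<longrightarrow> n - Min (card ` E) + 2 \<le> i \<longrightarrow>
           fvec n (\<lambda>k. int (chrom n E (k + 1))) i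
           = (\<Sum>j=0..i. (-1)^j * int (i choose j) * (int i - int j + 2)^n))"
proof -
  note fE = hypergraph_noloops_finite_edges(1)[OF H]
  note E = hypergraph_noloops_finite_edges(2,3)[OF H]
  let ?S = "\<lambda>m. alt_sum E m (\<lambda>J. Tcoef (ncomp n J) i)"
  have rhs: "(\<Sum>a=0..m'. (-1)^a * (\<Sum>b=0..n. int (scount n E a b) * Tcoef b i)) = ?S m'" for m'
    by (rule scount_alt_sum[OF fE])
  have f_full: "fvec n (\<lambda>k. int (chrom n E (k + 1))) i = int (full_colourings n E i)"
    by (rule fvec_chrom[OF fE E(1) i])
  have large_i: "?S (card E) = (\<Sum>j=0..i. (-1)^j * int (i choose j) * (int i - int j + 2)^n)"
    if "n - Min (card ` E) + 2 \<le> i"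
  proof -
    have "?S (card E) = Tcoef (ncomp n {}) i"
      using E that by (intro alt_sum_only_empty[OF fE] Tcoef_ncomp_vanishes[OF fE]) auto
    then show ?thesis by (simp add: ncomp_empty Tcoef_def)
  qed
  show ?thesis
    using full_colourings_bonferroni(1)[OF fE E(1), of i]
      full_colourings_bonferroni(2,3)[OF fE E(1), where i = i and m = m] f_full rhs large_i by auto
qed

end
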